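(* Let $\Omega\subset\mathbb{R}^n$, let $k$ be a kernel on $\Omega$ satisfying the standing assumptions in the context, and let $u\in H_k(\Omega)$. Apply the gradient Hermite–Birkhoff $f$-greedy algorithm (described in the context) to $u$ with index set $\mathcal J:=\{1,\dots,n\}$, producing selected pairs $(x_1,\ell_1),(x_2,\ell_2),\dots$ and errors $e_0,e_1,\dots$. Then, for every $m\ge 1$, \[ \min_{m+1\le i\le 2m}\ \|\nabla e_i\|_{L^\infty(\Omega)} \ \le\ \sqrt{n}\, m^{-1/2}\, \|e_{m+1}\|_{H_k(\Omega)} \left[\ \prod_{i=m+1}^{2m} P_i(x_{i+1},\ell_{i+1})\ \right]^{1/m}. \]
   Context: $k:\Omega\times\Omega\to\mathbb{R}$ is a symmetric positive definite kernel with reproducing kernel Hilbert space $H_k(\Omega)$, $k\in C^2(\Omega\times\Omega)$, and for every $x\in\Omega$ and $\ell\in\mathcal J$ the function $\partial^{(2)}_\ell k(\cdot,x)$ (the $\ell$-th partial derivative of $k$ in its second argument) lies in $H_k(\Omega)$ and satisfies the derivative reproducing property $\partial_\ell f(x)=\langle f,\partial_\ell^{(2)}k(\cdot,x)\rangle_{H_k(\Omega)}$ for all $f\in H_k(\Omega)$. For a finite selection $\{(x_i,\ell_i)\}_{i=1}^m\subset\Omega\times\mathcal J$ let $V_m:=\operatorname{span}\{\partial^{(2)}_{\ell_i}k(\cdot,x_i): i=1,\dots,m\}$ ($V_0=\{0\}$), let $\Pi_m:H_k(\Omega)\to V_m$ be the orthogonal projector, $s_m:=\Pi_m u$ and $e_m:=u-s_m$.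 The $f$-greedy algorithm: starting from $m=0$ (so $s_0=0$), for each $m\ge 0$ choose $(x_{m+1},\ell_{m+1})\in\operatorname{argmax}_{x\in\Omega,\ \ell\in\mathcal J}|\partial_\ell e_m(x)|$ (a maximizer is assumed to exist) and set $s_{m+1}:=\Pi_{m+1}u$. The (derivative) power function is $P_m(x,\ell):=\|(I-\Pi_m)\partial^{(2)}_\ell k(\cdot,x)\|_{H_k(\Omega)}$ for $(x,\ell)\in\Omega\times\mathcal J$. Finally $\|\nabla e\|_{L^\infty(\Omega)}:=\sup_{x\in\Omega}\|\nabla e(x)\|_2$. *)

theory Defs
  imports "HOL-Analysis.Analysis"
begin

definition C2_on :: "'a::real_normed_vector set \<Rightarrow> ('a \<Rightarrow> real) \<Rightarrow> bool" where
  "C2_on S f \<longleftrightarrow> (\<exists>f' :: 'a \<Rightarrow> ('a \<Rightarrow>\<^sub>L real). \<exists>f'' :: 'a \<Rightarrow> ('a \<Rightarrow>\<^sub>L ('a \<Rightarrow>\<^sub>L real)).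
      (\<forall>z\<in>S. (f has_derivative blinfun_apply (f' z)) (at z)) \<and>
      (\<forall>z\<in>S. (f' has_derivative blinfun_apply (f'' z)) (at z)) \<and>
      continuous_on S f'')"

definition spd_kernel :: "'a set \<Rightarrow> ('a \<Rightarrow> 'a \<Rightarrow> real) \<Rightarrow> bool" where
  "spd_kernel \<Omega> k \<longleftrightarrow> (\<forall>x\<in>\<Omega>. \<forall>y\<in>\<Omega>. k x y = k y x) \<and>
     (\<forall>X c. finite X \<longrightarrow> X \<subseteq> \<Omega> \<longrightarrow> (\<exists>x\<in>X. c x \<noteq> (0::real)) \<longrightarrow>
        (\<Sum>x\<in>X. \<Sum>y\<in>X. c x * c y * k x y) > 0)"

definition partial :: "(real^'n \<Rightarrow> real) \<Rightarrow> 'n \<Rightarrow> real^'n \<Rightarrow> real" where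
  "partial g l x = deriv (\<lambda>t. g (x + t *\<^sub>R axis l 1)) 0"

definition grad :: "(real^'n \<Rightarrow> real) \<Rightarrow> real^'n \<Rightarrow> real^'n" where
  "grad g x = (\<chi> l. partial g l x)"

definition grad_sup_norm :: "(real^'n) set \<Rightarrow> (real^'n \<Rightarrow> real) \<Rightarrow> real" where
  "grad_sup_norm \<Omega> g = (SUP x\<in>\<Omega>. norm (grad g x))"

definition orth_proj :: "'h::real_inner set \<Rightarrow> 'h \<Rightarrow> 'h" where
  "orth_proj V f = (THE v. v \<in> V \<and> (\<forall>w\<in>V. inner (f - v) w = 0))"

text \<open>RKHS element viewed as a function, via the kernel feature map K.\<close>
definition fun_of :: "(real^'n \<Rightarrow> 'h::real_inner) \<Rightarrow> 'h \<Rightarrow> real^'n \<Rightarrow> real" where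
  "fun_of K f = (\<lambda>x. inner f (K x))"

definition Vspace :: "(real^'n \<Rightarrow> 'n \<Rightarrow> 'h::real_inner) \<Rightarrow> (nat \<Rightarrow> (real^'n) \<times> 'n) \<Rightarrow> nat \<Rightarrow> 'h set" where
  "Vspace D sel m = span ((\<lambda>i. D (fst (sel i)) (snd (sel i))) ` {1..m})"

definition power_fun :: "(real^'n \<Rightarrow> 'n \<Rightarrow> 'h::real_inner) \<Rightarrow> (nat \<Rightarrow> (real^'n) \<times> 'n) \<Rightarrow> nat \<Rightarrow> real^'n \<Rightarrow> 'n \<Rightarrow> real" where
  "power_fun D sel m x l = norm (D x l - orth_proj (Vspace D sel m) (D x l))"

definition err :: "(real^'n \<Rightarrow> 'n \<Rightarrow> 'h::real_inner) \<Rightarrow> (nat \<Rightarrow> (real^'n) \<times> 'n) \<Rightarrow> 'h \<Rightarrow> nat \<Rightarrow> 'h" where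
  "err D sel u m = u - orth_proj (Vspace D sel m) u"

end

theory Submission
  imports Defs
begin

(*
  Let d_j be the kernel section selected in step j and w_j = (I - Pi_j) d_{j+1}, so that
  P_j(x_{j+1}, l_{j+1}) = ||w_j||. The greedy rule and the derivative reproducing property bound
  every partial derivative of e_j by |<e_j, d_{j+1}>|, hence ||grad e_j||_oo <= sqrt n |<e_j, d_{j+1}>|.
  Since e_j - e_{j+1} lies in V_{j+1} and is orthogonal to e_{j+1}, Cauchy-Schwarz gives
  <e_j, d_{j+1}>^2 <= (||e_j||^2 - ||e_{j+1}||^2) ||w_j||^2. Over j = m+1..2m the first factors
  telescope to at most ||e_{m+1}||^2, and the AM-GM inequality turns this into the bound.
*)

lemma exists_orthogonal_residual_span:
  fixes S :: "'h::real_inner set"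
  assumes "finite S"
  shows "\<exists>v\<in>span S. \<forall>w\<in>span S. inner (f - v) w = 0"
  using assms
proof (induction S arbitrary: f rule: finite_induct)
  case empty
  show ?case by simp
next
  case (insert a S)
  obtain vf where vf: "vf \<in> span S" "\<And>w. w \<in> span S \<Longrightarrow> inner (f - vf) w = 0"
    using insert.IH by blast
  obtain va where va: "va \<in> span S" "\<And>w. w \<in> span S \<Longrightarrow> inner (a - va) w = 0"
    using insert.IH by blast
  \<comment> \<open>Gram-Schmidt step: correct vf along the component d of a orthogonal to span S.\<close>
  define d where "d = a - va"
  define c where "c = inner (f - vf) d / (norm d)\<^sup>2"
  have d_in: "d \<in> span (insert a S)"
    unfolding d_def by (meson va(1) span_base span_diff span_mono insertI1 subset_insertI subsetD)
  have "vf + c *\<^sub>R d \<in> span (insert a S)"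
    using vf(1) d_in by (meson span_add span_scale span_mono subset_insertI subsetD)
  moreover have "inner (f - (vf + c *\<^sub>R d)) w = 0" if w: "w \<in> span (insert a S)" for w
  proof -
    obtain t where "w - t *\<^sub>R a \<in> span S" using w span_breakdown_eq by blast
    then have "(w - t *\<^sub>R a) + t *\<^sub>R va \<in> span S"
      using va(1) by (simp add: span_add span_scale)
    moreover have "(w - t *\<^sub>R a) + t *\<^sub>R va = w - t *\<^sub>R d"
      by (simp add: d_def algebra_simps)
    ultimately have y: "w - t *\<^sub>R d \<in> span S" by simp
    have "inner (f - vf) d - c * inner d d = 0"
      by (cases "d = 0") (simp_all add: c_def power2_norm_eq_inner)
    then have "inner (f - (vf + c *\<^sub>R d)) (t *\<^sub>R d) = 0"
      by (simp add: inner_diff_left algebra_simps)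
    moreover have "inner (f - (vf + c *\<^sub>R d)) (w - t *\<^sub>R d) = 0"
      using vf(2)[OF y] va(2)[OF y, folded d_def] by (simp add: inner_diff_left inner_add_left)
    ultimately show ?thesis by (simp add: inner_diff_right)
  qed
  ultimately show ?case by blast
qed

lemma
  fixes S :: "'h::real_inner set"
  assumes "finite S"
  shows orth_proj_in_span: "orth_proj (span S) f \<in> span S"
    and orth_proj_orthogonal: "w \<in> span S \<Longrightarrow> inner (f - orth_proj (span S) f) w = 0"
proof -
  have "\<exists>!v. v \<in> span S \<and> (\<forall>w\<in>span S. inner (f - v) w = 0)"
  proof (rule ex_ex1I)
    show "\<exists>v. v \<in> span S \<and> (\<forall>w\<in>span S. inner (f - v) w = 0)"
      using exists_orthogonal_residual_span[OF assms] by blast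
  next
    fix v1 v2
    assume v1: "v1 \<in> span S \<and> (\<forall>w\<in>span S. inner (f - v1) w = 0)"
      and v2: "v2 \<in> span S \<and> (\<forall>w\<in>span S. inner (f - v2) w = 0)"
    then have "v1 - v2 \<in> span S" by (simp add: span_diff)
    then have "inner (v1 - v2) (v1 - v2) = inner (f - v2) (v1 - v2) - inner (f - v1) (v1 - v2)"
      and "inner (f - v2) (v1 - v2) = 0" "inner (f - v1) (v1 - v2) = 0"
      using v1 v2 by (simp_all add: inner_diff_left)
    then show "v1 = v2" by simp
  qed
  then have "orth_proj (span S) f \<in> span S \<and> (\<forall>w\<in>span S. inner (f - orth_proj (span S) f) w = 0)"
    unfolding orth_proj_def by (rule theI')
  then show "orth_proj (span S) f \<in> span S" and "w \<in> span S \<Longrightarrow> inner (f - orth_proj (span S) f) w = 0"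
    by blast+
qed

lemma inner_residual_le_sqrt_error_decrease:
  fixes u a :: "'h::real_inner"
  assumes "finite T" "S \<subseteq> T" "a \<in> span T"
  defines "P \<equiv> orth_proj (span S)" and "Q \<equiv> orth_proj (span T)"
  shows "\<bar>inner (u - P u) a\<bar> \<le> sqrt ((norm (u - P u))\<^sup>2 - (norm (u - Q u))\<^sup>2) * norm (a - P a)"
proof -
  have "finite S" using assms(1,2) finite_subset by blast
  have ST: "span S \<subseteq> span T" using assms(2) by (rule span_mono)
  define d where "d = Q u - P u"
  have d_in: "d \<in> span T"
    using orth_proj_in_span[OF \<open>finite S\<close>] orth_proj_in_span[OF assms(1)] ST
    by (auto simp: d_def P_def Q_def intro: span_diff)
  have aPa_in: "a - P a \<in> span T"
    using orth_proj_in_span[OF \<open>finite S\<close>] ST assms(3) by (auto simp: P_def intro: span_diff)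
  have residual_split: "u - P u = (u - Q u) + d" by (simp add: d_def)
  have "inner (u - P u) a = inner (u - P u) (a - P a)"
    using orth_proj_orthogonal[OF \<open>finite S\<close> orth_proj_in_span[OF \<open>finite S\<close>]]
    by (simp add: P_def inner_diff_right)
  also have "\<dots> = inner d (a - P a)"
    using orth_proj_orthogonal[OF assms(1) aPa_in] by (simp add: residual_split inner_add_left Q_def)
  finally have "\<bar>inner (u - P u) a\<bar> \<le> norm d * norm (a - P a)"
    by (simp add: Cauchy_Schwarz_ineq2)
  moreover have "(norm (u - P u))\<^sup>2 = (norm (u - Q u))\<^sup>2 + (norm d)\<^sup>2"
    using orth_proj_orthogonal[OF assms(1) d_in] unfolding residual_split
    by (intro norm_add_Pythagorean) (simp add: orthogonal_def Q_def)
  ultimately show ?thesis by simp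
qed

lemma abs_inner_err_le_power_fun:
  fixes D :: "real^'n \<Rightarrow> 'n \<Rightarrow> 'h::real_inner"
  shows "\<bar>inner (err D sel u j) (D (fst (sel (Suc j))) (snd (sel (Suc j))))\<bar>
    \<le> sqrt ((norm (err D sel u j))\<^sup>2 - (norm (err D sel u (Suc j)))\<^sup>2)
       * power_fun D sel j (fst (sel (Suc j))) (snd (sel (Suc j)))"
proof -
  define d where "d i = D (fst (sel i)) (snd (sel i))" for i
  have "d (Suc j) \<in> span (d ` {1..Suc j})" by (simp add: span_base)
  from inner_residual_le_sqrt_error_decrease[OF _ _ this, of "d ` {1..j}" u]
  show ?thesis by (simp add: err_def power_fun_def Vspace_def d_def image_mono)
qed

lemma norm_le_sqrt_card_mult:
  fixes v :: "real^'n"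
  assumes "\<And>l. \<bar>v $ l\<bar> \<le> R"
  shows "norm v \<le> sqrt (real CARD('n)) * R"
proof -
  have "R \<ge> 0" using assms[of undefined] by linarith
  have "norm v = L2_set (\<lambda>l. \<bar>v $ l\<bar>) UNIV" by (simp add: norm_vec_def)
  also have "\<dots> \<le> L2_set (\<lambda>l. R) (UNIV :: 'n set)" by (rule L2_set_mono) (use assms in auto)
  also have "\<dots> = sqrt (real CARD('n)) * R" using \<open>R \<ge> 0\<close> by (simp add: L2_set_constant)
  finally show ?thesis .
qed

lemma grad_sup_norm_le:
  fixes g :: "real^'n \<Rightarrow> real"
  assumes "\<Omega> \<noteq> {}" and "\<And>x l. x \<in> \<Omega> \<Longrightarrow> \<bar>partial g l x\<bar> \<le> R"
  shows "grad_sup_norm \<Omega> g \<le> sqrt (real CARD('n)) * R"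
  unfolding grad_sup_norm_def
proof (rule cSUP_least[OF assms(1)])
  fix x assume "x \<in> \<Omega>"
  then show "norm (grad g x) \<le> sqrt (real CARD('n)) * R"
    by (intro norm_le_sqrt_card_mult) (simp add: grad_def assms(2))
qed

lemma le_geometric_mean_of_sum_div_squares_le:
  fixes p :: "'i \<Rightarrow> real"
  assumes "finite I" "I \<noteq> {}" "A > 0" "E \<ge> 0" and p: "\<And>i. i \<in> I \<Longrightarrow> p i > 0"
    and sum_le: "(\<Sum>i\<in>I. (A / p i)\<^sup>2) \<le> E\<^sup>2"
  shows "A \<le> real (card I) powr (-1/2) * E * (\<Prod>i\<in>I. p i) powr (1 / real (card I))"
proof -
  define n where "n = real (card I)"
  define P where "P = (\<Prod>i\<in>I. p i)"
  define g where "g = P powr (1 / n)"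
  have n: "n > 0" using assms by (simp add: n_def card_gt_0_iff)
  have P: "P > 0" using p by (simp add: P_def prod_pos)
  then have g: "g > 0" by (simp add: g_def)
  have "g ^ card I = P"
    using P n by (simp add: g_def powr_realpow[symmetric] powr_powr n_def)
  then have "(\<Prod>i\<in>I. (A / p i)\<^sup>2) = ((A / g) ^ card I)\<^sup>2"
    by (simp add: P_def power_divide prod_dividef prod_power_distrib flip: power_mult)
       (simp add: mult.commute)
  also have "\<dots> = ((A / g)\<^sup>2) powr n"
    using \<open>A > 0\<close> g by (simp add: powr_realpow n_def flip: power_mult) (simp add: mult.commute)
  finally have "(A / g)\<^sup>2 = (\<Prod>i\<in>I. (A / p i)\<^sup>2) powr (1 / n)"
    using n by (simp add: powr_powr)
  also have "\<dots> \<le> (\<Sum>i\<in>I. (A / p i)\<^sup>2 / n)"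
    using arith_geom_mean[OF assms(1,2), of "\<lambda>i. (A / p i)\<^sup>2"] by (simp add: n_def)
  also have "\<dots> \<le> E\<^sup>2 / n"
    using sum_le n by (simp add: divide_right_mono flip: sum_divide_distrib)
  finally have "A\<^sup>2 \<le> E\<^sup>2 / n * g\<^sup>2"
    using g by (simp add: power_divide pos_divide_le_eq)
  also have "\<dots> = (E * g / sqrt n)\<^sup>2"
    using n by (simp add: power_divide power_mult_distrib)
  finally have "A \<le> E * g / sqrt n"
    by (rule power2_le_imp_le) (use \<open>E \<ge> 0\<close> g n in simp)
  also have "\<dots> = real (card I) powr (-1/2) * E * (\<Prod>i\<in>I. p i) powr (1 / real (card I))"
    by (simp add: g_def P_def n_def powr_minus_divide powr_half_sqrt)
  finally show ?thesis .
qed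

lemma Min_le_geometric_mean_bound:
  fixes a r p :: "'i \<Rightarrow> real"
  assumes "finite I" "I \<noteq> {}" "c \<ge> 0" "E \<ge> 0" and p_nonneg: "\<And>i. i \<in> I \<Longrightarrow> p i \<ge> 0"
    and a_le: "\<And>i. i \<in> I \<Longrightarrow> a i \<le> c * sqrt (r i) * p i"
    and sum_r: "(\<Sum>i\<in>I. r i) \<le> E\<^sup>2"
  shows "(MIN i\<in>I. a i) \<le> c * real (card I) powr (-1/2) * E * (\<Prod>i\<in>I. p i) powr (1 / real (card I))"
    (is "?\<mu> \<le> ?rhs")
proof (cases "?\<mu> > 0")
  case False
  have "?rhs \<ge> 0" using assms by simp
  with False show ?thesis by linarith
next
  case True
  have \<mu>_le: "?\<mu> \<le> c * sqrt (r i) * p i" if "i \<in> I" for i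
    using assms that by (meson Min_le finite_imageI image_eqI order_trans)
  then have c_p: "c > 0 \<and> p i > 0" if "i \<in> I" for i
    using that True p_nonneg[OF that] \<open>c \<ge> 0\<close>
    by (smt (verit) mult_nonneg_nonneg real_sqrt_lt_0_iff zero_less_mult_iff)
  then have "c > 0" using \<open>I \<noteq> {}\<close> by blast
  have "(\<Sum>i\<in>I. (?\<mu> / c / p i)\<^sup>2) \<le> (\<Sum>i\<in>I. r i)"
  proof (rule sum_mono)
    fix i assume "i \<in> I"
    then have "?\<mu> / c / p i \<le> sqrt (r i)"
      using \<mu>_le c_p by (simp add: pos_divide_le_eq mult_ac)
    then have "\<bar>?\<mu> / c / p i\<bar> \<le> sqrt (r i)"
      using c_p[OF \<open>i \<in> I\<close>] True by (simp add: abs_mult)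
    then show "(?\<mu> / c / p i)\<^sup>2 \<le> r i" by (rule sqrt_ge_absD)
  qed
  then have "?\<mu> / c \<le> real (card I) powr (-1/2) * E * (\<Prod>i\<in>I. p i) powr (1 / real (card I))"
    using sum_r c_p True \<open>c > 0\<close> \<open>E \<ge> 0\<close>
    by (intro le_geometric_mean_of_sum_div_squares_le[OF assms(1,2)]) auto
  with \<open>c > 0\<close> show ?thesis by (simp add: divide_le_eq mult_ac)
qed

theorem theorem1:
  fixes \<Omega> :: "(real^'n) set"
    and k :: "real^'n \<Rightarrow> real^'n \<Rightarrow> real"
    and K :: "real^'n \<Rightarrow> 'h::{real_inner, complete_space}"
    and D :: "real^'n \<Rightarrow> 'n \<Rightarrow> 'h"
    and u :: 'h
    and sel :: "nat \<Rightarrow> (real^'n) \<times> 'n"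
    and m :: nat
  assumes "open \<Omega>"
    and spd: "spd_kernel \<Omega> k"
    and C2: "C2_on (\<Omega> \<times> \<Omega>) (\<lambda>(x, y). k x y)"
    and rk: "\<forall>x\<in>\<Omega>. \<forall>y\<in>\<Omega>. k x y = inner (K x) (K y)"
    and dense: "closure (span (K ` \<Omega>)) = UNIV"
    and dreprod: "\<forall>f. \<forall>x\<in>\<Omega>. \<forall>l.
        ((\<lambda>t. fun_of K f (x + t *\<^sub>R axis l 1)) has_real_derivative inner f (D x l)) (at 0)"
    and greedy_in: "\<forall>j. fst (sel (Suc j)) \<in> \<Omega>"
    and greedy_max: "\<forall>j. \<forall>x\<in>\<Omega>. \<forall>l.
        \<bar>partial (fun_of K (err D sel u j)) l x\<bar>
          \<le> \<bar>partial (fun_of K (err D sel u j)) (snd (sel (Suc j))) (fst (sel (Suc j)))\<bar>"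
    and "m \<ge> 1"
  shows "(MIN i\<in>{m+1..2*m}. grad_sup_norm \<Omega> (fun_of K (err D sel u i)))
     \<le> sqrt (real CARD('n)) * real m powr (-1/2) * norm (err D sel u (m+1))
        * (\<Prod>i=m+1..2*m. power_fun D sel i (fst (sel (i+1))) (snd (sel (i+1)))) powr (1 / real m)"
proof -
  let ?e = "err D sel u" and ?x = "\<lambda>j. fst (sel (Suc j))" and ?l = "\<lambda>j. snd (sel (Suc j))"
  have partial_eq: "partial (fun_of K f) l x = inner f (D x l)" if "x \<in> \<Omega>" for f l x
    unfolding partial_def using dreprod that by (blast intro: DERIV_imp_deriv)
  have grad_le: "grad_sup_norm \<Omega> (fun_of K (?e j)) \<le> sqrt (real CARD('n)) * \<bar>inner (?e j) (D (?x j) (?l j))\<bar>"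
    for j
  proof (rule grad_sup_norm_le)
    show "\<Omega> \<noteq> {}" using greedy_in by blast
  next
    fix x l assume "x \<in> \<Omega>"
    then show "\<bar>partial (fun_of K (?e j)) l x\<bar> \<le> \<bar>inner (?e j) (D (?x j) (?l j))\<bar>"
      using greedy_max greedy_in by (simp add: partial_eq)
  qed
  have "(\<Sum>i=m+1..2*m. (norm (?e i))\<^sup>2 - (norm (?e (Suc i)))\<^sup>2) = (norm (?e (m+1)))\<^sup>2 - (norm (?e (Suc (2*m))))\<^sup>2"
    using sum_Suc_diff[of "m+1" "2*m" "\<lambda>i. - (norm (?e i))\<^sup>2"] \<open>m \<ge> 1\<close> by simp
  then have telescope: "(\<Sum>i=m+1..2*m. (norm (?e i))\<^sup>2 - (norm (?e (Suc i)))\<^sup>2) \<le> (norm (?e (m+1)))\<^sup>2"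
    by simp
  have "(MIN i\<in>{m+1..2*m}. grad_sup_norm \<Omega> (fun_of K (?e i)))
      \<le> sqrt (real CARD('n)) * real (card {m+1..2*m}) powr (-1/2) * norm (?e (m+1))
         * (\<Prod>i=m+1..2*m. power_fun D sel i (?x i) (?l i)) powr (1 / real (card {m+1..2*m}))"
  proof (rule Min_le_geometric_mean_bound[OF _ _ _ _ _ _ telescope])
    fix i
    show "grad_sup_norm \<Omega> (fun_of K (?e i))
      \<le> sqrt (real CARD('n)) * sqrt ((norm (?e i))\<^sup>2 - (norm (?e (Suc i)))\<^sup>2) * power_fun D sel i (?x i) (?l i)"
      using order_trans[OF grad_le mult_left_mono[OF abs_inner_err_le_power_fun]] by (simp add: mult.assoc)
  qed (use \<open>m \<ge> 1\<close> in \<open>auto simp: power_fun_def\<close>)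
  then show ?thesis by simp
qed

end
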